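(* Let $q$ be the semi-Markov kernel of a homogeneous $d$-dimensional multi-time Markov renewal chain (so in particular $q(0_d)=O_s$). Then $\mathbbm{I}_s-q$ has a convolutional inverse, given by $$u:=(\mathbbm{I}_s-q)^{(-1)}=\sum_{n\ge0}q^{(n)}.$$
   Context: $E=\{1,\dots,s\}$; $\mathcal{M}_s(\mathbb{N}^d)$ is the set of functions $\mathbb{N}^d\to\mathbb{R}^{s\times s}$, with convolution $[A*B](k)=\sum_{l+l'=k}A(l)B(l')$, identity $\mathbbm{I}_s$ ($\mathbbm{I}_s(0_d)=I_s$, zero elsewhere), powers $A^{(0)}=\mathbbm{I}_s$, $A^{(n)}=A*A^{(n-1)}$, and convolutional inverse $A^{(-1)}$ with $A*A^{(-1)}=A^{(-1)}*A=\mathbbm{I}_s$. A homogeneous $d$-dimensional multi-time Markov renewal chain is a process $(J_n,S_n)_{n\in\mathbb{N}}$, $J_n\in E$, $S_n\in\mathbb{N}^d$, $S_0=0_d$, $S_n<S_{n+1}$ (componentwise $\le$ and not equal), such that a.s. $\mathbb{P}(J_{n+1}=j,S_{n+1}-S_n=k\mid J_{0:n},S_{0:n})=q_{J_nj}(k)$ with $q_{ij}(k)=\mathbb{P}(J_{n+1}=j,S_{n+1}-S_n=k\mid J_n=i)$ independent of $n$; $q\in\mathcal{M}_s(\mathbb{N}^d)$ is its semi-Markov kernel. The series is pointwise and finite at each point. *)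

theory Defs
  imports "HOL-Probability.Probability"
begin

text \<open>Time points in \<open>\<nat>^d\<close> are \<open>nat ^ 'd\<close>; the state space \<open>E\<close> is a finite type \<open>'s\<close>;
  elements of \<open>\<M>_s(\<nat>^d)\<close> are functions \<open>nat ^ 'd \<Rightarrow> real ^ 's ^ 's\<close>.\<close>

definition vle :: "nat ^ 'd \<Rightarrow> nat ^ 'd \<Rightarrow> bool" where
  "vle k l \<longleftrightarrow> (\<forall>i. k $ i \<le> l $ i)"

definition vless :: "nat ^ 'd \<Rightarrow> nat ^ 'd \<Rightarrow> bool" where
  "vless k l \<longleftrightarrow> vle k l \<and> k \<noteq> l"

definition mconv :: "(nat ^ 'd \<Rightarrow> real ^ 's ^ 's) \<Rightarrow> (nat ^ 'd \<Rightarrow> real ^ 's ^ 's)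
    \<Rightarrow> (nat ^ 'd \<Rightarrow> real ^ 's ^ 's)" where
  "mconv A B k = (\<Sum>p\<in>{(l, l'). l + l' = k}. A (fst p) ** B (snd p))"

definition mid :: "nat ^ 'd \<Rightarrow> real ^ 's ^ 's" where
  "mid k = (if k = 0 then mat 1 else 0)"

fun mpow :: "(nat ^ 'd \<Rightarrow> real ^ 's ^ 's) \<Rightarrow> nat \<Rightarrow> (nat ^ 'd \<Rightarrow> real ^ 's ^ 's)" where
  "mpow A 0 = mid"
| "mpow A (Suc n) = mconv A (mpow A n)"

text \<open>Homogeneous d-dimensional multi-time Markov renewal chain \<open>(J_n,S_n)\<close> on the probability
  space \<open>M\<close> with semi-Markov kernel \<open>q\<close>: \<open>q k $ i $ j = q_{ij}(k)\<close>. Since all variables are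
  discrete, the a.s. conditional-probability identity is stated on cylinder events.\<close>

definition mtmrc :: "'a measure \<Rightarrow> (nat \<Rightarrow> 'a \<Rightarrow> 's::finite) \<Rightarrow> (nat \<Rightarrow> 'a \<Rightarrow> nat ^ 'd)
    \<Rightarrow> (nat ^ 'd \<Rightarrow> real ^ 's ^ 's) \<Rightarrow> bool" where
  "mtmrc M J S q \<longleftrightarrow>
     prob_space M \<and>
     (\<forall>n. J n \<in> measurable M (count_space UNIV)) \<and>
     (\<forall>n. S n \<in> measurable M (count_space UNIV)) \<and>
     (AE x in M. S 0 x = 0) \<and>
     (\<forall>n. AE x in M. vless (S n x) (S (Suc n) x)) \<and>
     (\<forall>n (jj :: nat \<Rightarrow> 's) (ss :: nat \<Rightarrow> nat ^ 'd) j k.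
        measure M {x \<in> space M. (\<forall>m\<le>n. J m x = jj m \<and> S m x = ss m)
                                  \<and> J (Suc n) x = j \<and> S (Suc n) x = ss n + k}
        = q k $ jj n $ j * measure M {x \<in> space M. \<forall>m\<le>n. J m x = jj m \<and> S m x = ss m})"

end

theory Submission
  imports Defs
begin

text \<open>Every term
  of \<open>q^(n)(k)\<close> is a product of \<open>n\<close> values of \<open>q\<close> at times summing to \<open>k\<close>, and it vanishes unless
  all these times are nonzero, so \<open>q^(n)(k) = 0\<close> once \<open>n\<close> exceeds the coordinate sum
  \<open>|k|\<close> of \<open>k\<close>, and \<open>u = \<Sum>\<^sub>n q^(n)\<close> is pointwise a finite sum. Since \<open>(q * u)(k)\<close>
  only involves \<open>u\<close> at times \<open>\<le> k\<close>, it may be computed with the partial sum of the first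
  \<open>|k| + 1\<close> terms, where the geometric series telescopes:
  \<open>q * \<Sum>\<^sub>n\<^sub><\<^sub>N q^(n) = \<Sum>\<^sub>n\<^sub>\<le>\<^sub>N q^(n) - \<II>\<^sub>s\<close>.\<close>

lemma matrix_add_rdistrib: "((A::'a::semiring_1^'n^'m) + B) ** C = A ** C + B ** C"
  by (vector matrix_matrix_mult_def sum.distrib[symmetric] field_simps)

lemma matrix_diff_rdistrib: "((A::'a::ring_1^'n^'m) - B) ** C = A ** C - B ** C"
  by (vector matrix_matrix_mult_def sum_subtractf[symmetric] field_simps)

lemma matrix_diff_ldistrib: "(C::'a::ring_1^'n^'m) ** (A - B) = C ** A - C ** B"
  by (vector matrix_matrix_mult_def sum_subtractf[symmetric] field_simps)

lemma matrix_mul_sum_right: "(A::'a::semiring_1^'n^'m) ** sum f S = (\<Sum>x\<in>S. A ** f x)"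
  by (induction S rule: infinite_finite_induct) (simp_all add: matrix_add_ldistrib)

lemma matrix_mul_sum_left: "sum f S ** (A::'a::semiring_1^'n^'m) = (\<Sum>x\<in>S. f x ** A)"
  by (induction S rule: infinite_finite_induct) (simp_all add: matrix_add_rdistrib)

lemma finite_atMost_nat_vec: "finite {l::nat^'d. l \<le> k}"
proof -
  have "{l::nat^'d. l \<le> k} = vec_nth -` PiE UNIV (\<lambda>i. {..k$i})"
    by (auto simp: less_eq_vec_def)
  then show ?thesis
    by (simp add: finite_vimageI finite_PiE inj_def vec_eq_iff)
qed

lemma finite_add_decompositions: "finite {(l, l'::nat^'d). l + l' = k}"
proof (rule finite_subset)
  show "{(l, l'::nat^'d). l + l' = k} \<subseteq> {l. l \<le> k} \<times> {l. l \<le> k}"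
    by (auto simp: less_eq_vec_def)
qed (simp add: finite_atMost_nat_vec)

lemma mconv_cong:
  assumes "\<And>l. l \<le> k \<Longrightarrow> A l = A' l" and "\<And>l. l \<le> k \<Longrightarrow> B l = B' l"
  shows "mconv A B k = mconv A' B' k"
  unfolding mconv_def
proof (rule sum.cong[OF refl])
  fix p assume "p \<in> {(l, l'). l + l' = k}"
  then have "fst p \<le> k" "snd p \<le> k"
    by (auto simp: less_eq_vec_def)
  then show "A (fst p) ** B (snd p) = A' (fst p) ** B' (snd p)"
    using assms by simp
qed

lemma mconv_mid_left: "mconv mid B = B"
proof
  fix k
  have "mconv mid B k = (\<Sum>p\<in>{(l, l'). l + l' = k}. if p = (0, k) then B k else 0)"
    unfolding mconv_def by (rule sum.cong) (auto simp: mid_def)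
  also have "\<dots> = B k"
    by (simp add: sum.delta[OF finite_add_decompositions])
  finally show "mconv mid B k = B k" .
qed

lemma mconv_mid_right: "mconv A mid = A"
proof
  fix k
  have "mconv A mid k = (\<Sum>p\<in>{(l, l'). l + l' = k}. if p = (k, 0) then A k else 0)"
    unfolding mconv_def by (rule sum.cong) (auto simp: mid_def)
  also have "\<dots> = A k"
    by (simp add: sum.delta[OF finite_add_decompositions])
  finally show "mconv A mid k = A k" .
qed

lemma mconv_diff_left: "mconv (\<lambda>k. A k - B k) C k = mconv A C k - mconv B C k"
  unfolding mconv_def by (simp add: matrix_diff_rdistrib sum_subtractf)

lemma mconv_diff_right: "mconv A (\<lambda>k. B k - C k) k = mconv A B k - mconv A C k"
  unfolding mconv_def by (simp add: matrix_diff_ldistrib sum_subtractf)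

lemma mconv_sum_left: "mconv (\<lambda>k. \<Sum>n\<in>S. F n k) A k = (\<Sum>n\<in>S. mconv (F n) A k)"
  unfolding mconv_def by (simp add: matrix_mul_sum_left sum.swap[of _ S])

lemma mconv_sum_right: "mconv A (\<lambda>k. \<Sum>n\<in>S. F n k) k = (\<Sum>n\<in>S. mconv A (F n) k)"
  unfolding mconv_def by (simp add: matrix_mul_sum_right sum.swap[of _ S])

lemma mconv_assoc: "mconv (mconv A B) C = mconv A (mconv B C)"
proof
  fix k
  have "mconv (mconv A B) C k =
    (\<Sum>(p, r)\<in>Sigma {(j, c). j + c = k} (\<lambda>p. {(a, b). a + b = fst p}).
      A (fst r) ** B (snd r) ** C (snd p))"
    unfolding mconv_def matrix_mul_sum_left
    by (rule sum.Sigma) (auto intro: finite_add_decompositions)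
  also have "\<dots> = (\<Sum>(p, r)\<in>Sigma {(a, j). a + j = k} (\<lambda>p. {(b, c). b + c = snd p}).
      A (fst p) ** (B (fst r) ** C (snd r)))"
    by (rule sum.reindex_bij_witness[where i="\<lambda>((a, j), (b, c)). ((a + b, c), (a, b))"
          and j="\<lambda>((j, c), (a, b)). ((a, b + c), (b, c))"])
       (auto simp: matrix_mul_assoc add.assoc)
  also have "\<dots> = mconv A (mconv B C) k"
    unfolding mconv_def matrix_mul_sum_right
    by (rule sum.Sigma[symmetric]) (auto intro: finite_add_decompositions)
  finally show "mconv (mconv A B) C k = mconv A (mconv B C) k" .
qed

lemma mpow_Suc2: "mpow A (Suc n) = mconv (mpow A n) A"
proof (induction n)
  case (Suc n)
  have "mpow A (Suc (Suc n)) = mconv A (mconv (mpow A n) A)"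
    by (simp only: mpow.simps(2)[of A "Suc n"] Suc.IH)
  also have "\<dots> = mconv (mpow A (Suc n)) A"
    by (simp add: mconv_assoc)
  finally show ?case .
qed (simp add: mconv_mid_left mconv_mid_right)

definition coord_sum :: "nat^'d \<Rightarrow> nat" where
  "coord_sum k = (\<Sum>i\<in>UNIV. k $ i)"

lemma coord_sum_add: "coord_sum (a + b) = coord_sum a + coord_sum b"
  unfolding coord_sum_def by (simp add: sum.distrib)

lemma coord_sum_pos: "a \<noteq> 0 \<Longrightarrow> 0 < coord_sum a"
proof -
  assume "a \<noteq> 0"
  then obtain i where "0 < a $ i"
    by (auto simp: vec_eq_iff)
  also have "a $ i \<le> coord_sum a"
    unfolding coord_sum_def by (rule member_le_sum) auto
  finally show ?thesis .
qed

lemma mpow_eq_0: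
  assumes "q 0 = 0" and "coord_sum k < n"
  shows "mpow q n k = 0"
  using assms(2)
proof (induction n arbitrary: k)
  case (Suc n)
  have "q a ** mpow q n b = 0" if "a + b = k" for a b
  proof (cases "a = 0")
    case False
    then have "coord_sum b < n"
      using coord_sum_pos[of a] coord_sum_add[of a b] that Suc.prems by simp
    then show ?thesis using Suc.IH by simp
  qed (simp add: assms(1))
  then show ?case
    by (auto simp: mconv_def intro: sum.neutral)
qed simp

lemma mconv_partial_sum_left:
  "mconv A (\<lambda>k. \<Sum>n<N. mpow A n k) k = (\<Sum>n<Suc N. mpow A n k) - mid k"
  by (simp add: mconv_sum_right sum.lessThan_Suc_shift del: sum.lessThan_Suc)

lemma mconv_partial_sum_right:
  "mconv (\<lambda>k. \<Sum>n<N. mpow A n k) A k = (\<Sum>n<Suc N. mpow A n k) - mid k"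
  by (simp add: mconv_sum_left sum.lessThan_Suc_shift mpow_Suc2
      del: sum.lessThan_Suc mpow.simps(2))

definition mpow_series :: "(nat^'d \<Rightarrow> real^'s^'s) \<Rightarrow> nat^'d \<Rightarrow> real^'s^'s" where
  "mpow_series q k = (\<Sum>n\<le>coord_sum k. mpow q n k)"

lemma mpow_series_eq_partial_sum:
  assumes "q 0 = 0" and "coord_sum k < N"
  shows "mpow_series q k = (\<Sum>n<N. mpow q n k)"
  unfolding mpow_series_def
  by (rule sum.mono_neutral_left) (use assms mpow_eq_0[of q] in auto)

lemma sums_mpow_series:
  assumes "q 0 = 0"
  shows "(\<lambda>n. mpow q n k) sums mpow_series q k"
  unfolding mpow_series_def
  by (rule sums_finite) (use assms mpow_eq_0[of q] in auto)

lemma mpow_series_eq_partial_sum_below: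
  assumes "q 0 = 0" and "l \<le> k"
  shows "mpow_series q l = (\<Sum>n<Suc (coord_sum k). mpow q n l)"
proof (rule mpow_series_eq_partial_sum[of q, OF assms(1)])
  have "coord_sum l \<le> coord_sum k"
    using assms(2) unfolding coord_sum_def less_eq_vec_def by (simp add: sum_mono)
  then show "coord_sum l < Suc (coord_sum k)" by simp
qed

lemma mconv_mpow_series_left:
  assumes "q 0 = 0"
  shows "mconv q (mpow_series q) k = mpow_series q k - mid k"
proof -
  let ?N = "Suc (coord_sum k)"
  have "mconv q (mpow_series q) k = mconv q (\<lambda>l. \<Sum>n<?N. mpow q n l) k"
    by (rule mconv_cong) (simp_all add: mpow_series_eq_partial_sum_below[of q, OF assms])
  also have "\<dots> = (\<Sum>n<Suc ?N. mpow q n k) - mid k"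
    by (rule mconv_partial_sum_left)
  also have "\<dots> = mpow_series q k - mid k"
    by (simp add: mpow_series_eq_partial_sum[of q, OF assms, of k "Suc ?N"])
  finally show ?thesis .
qed

lemma mconv_mpow_series_right:
  assumes "q 0 = 0"
  shows "mconv (mpow_series q) q k = mpow_series q k - mid k"
proof -
  let ?N = "Suc (coord_sum k)"
  have "mconv (mpow_series q) q k = mconv (\<lambda>l. \<Sum>n<?N. mpow q n l) q k"
    by (rule mconv_cong) (simp_all add: mpow_series_eq_partial_sum_below[of q, OF assms])
  also have "\<dots> = (\<Sum>n<Suc ?N. mpow q n k) - mid k"
    by (rule mconv_partial_sum_right)
  also have "\<dots> = mpow_series q k - mid k"
    by (simp add: mpow_series_eq_partial_sum[of q, OF assms, of k "Suc ?N"])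
  finally show ?thesis .
qed

theorem proposition7:
  fixes M :: "'a measure" and J :: "nat \<Rightarrow> 'a \<Rightarrow> 's::finite"
    and S :: "nat \<Rightarrow> 'a \<Rightarrow> nat ^ 'd" and q :: "nat ^ 'd \<Rightarrow> real ^ 's ^ 's"
  assumes "mtmrc M J S q"
    and "q 0 = 0"
  shows "\<exists>u. (\<forall>k. \<exists>N. \<forall>n\<ge>N. mpow q n k = 0)
           \<and> (\<forall>k. (\<lambda>n. mpow q n k) sums u k)
           \<and> mconv (\<lambda>k. mid k - q k) u = mid
           \<and> mconv u (\<lambda>k. mid k - q k) = mid"
proof (intro exI[of _ "mpow_series q"] conjI allI)
  fix k
  show "\<exists>N. \<forall>n\<ge>N. mpow q n k = 0"
    using mpow_eq_0[of q, OF assms(2)] by (intro exI[of _ "Suc (coord_sum k)"]) auto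
  show "(\<lambda>n. mpow q n k) sums mpow_series q k"
    using assms(2) by (rule sums_mpow_series)
next
  show "mconv (\<lambda>k. mid k - q k) (mpow_series q) = mid"
    by (simp add: fun_eq_iff mconv_diff_left mconv_mid_left mconv_mpow_series_left[of q, OF assms(2)])
  show "mconv (mpow_series q) (\<lambda>k. mid k - q k) = mid"
    by (simp add: fun_eq_iff mconv_diff_right mconv_mid_right mconv_mpow_series_right[of q, OF assms(2)])
qed

end
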